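(* Let $s\ge 1$ and let $2\le n_0\le n_1\le\dots\le n_s$ be integers. For $0\le i\le s-1$ let $k_i=\frac{\log n_s}{\log n_i}$, and let $x_0$ be the unique root of the equation $sx-1-\sum_{j=0}^{s-1}x^{\frac{k_j-1}{k_j}}=0$ in the interval $[1,\infty)$. Then $$\frac{s+1}{s}\le x_0<\max(k_0,e+2).$$
   Context: All logarithms are to base 2. *)

theory Defs
  imports "HOL-Analysis.Analysis"
begin

text \<open>k_i = log n_s / log n_i (base irrelevant for the ratio; base 2 as in the paper).\<close>
definition k :: "(nat \<Rightarrow> nat) \<Rightarrow> nat \<Rightarrow> nat \<Rightarrow> real" where
  "k n s i = log 2 (real (n s)) / log 2 (real (n i))"

end

theory Submission
  imports Defs
begin

text \<open>
  The exponents (k_j - 1)/k_j lie in [0, 1 - 1/k_0], so each summand lies between 1 and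
  x0^(1 - 1/k_0). The lower bound gives s x0 - 1 \<ge> s. The upper bound gives
  x0 - x0^(1 - 1/k_0) \<le> 1, whereas for x \<ge> max(K, e + 2) one has
  x - x^(1 - 1/K) = x (1 - exp (-t)) \<ge> x t/(1 + t) > 1 with t = ln x / K,
  because (x - 1) ln x > x \<ge> K once x \<ge> e + 2.
\<close>

lemma self_less_pred_mult_ln:
  fixes x :: real
  assumes "exp 1 + 2 \<le> x"
  shows "x < (x - 1) * ln x"
proof -
  have x2: "2 < x" using assms exp_gt_zero[of 1] by linarith
  have "2 - exp 1 / x \<le> ln x"
    using ln_diff_le[of "exp 1" x] x2 by (simp add: diff_divide_distrib)
  moreover have "x < (x - 1) * (2 - exp 1 / x)"
  proof -
    have "2 * (x - 1) \<le> (x - exp 1) * (x - 1)"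
      using assms x2 by (intro mult_right_mono) auto
    with x2 show ?thesis by (simp add: field_simps)
  qed
  ultimately show ?thesis
    using x2 mult_left_mono[of "2 - exp 1 / x" "ln x" "x - 1"] by linarith
qed

lemma exp_minus_le_inverse_one_plus:
  fixes t :: real
  assumes "0 \<le> t"
  shows "exp (- t) \<le> 1 / (1 + t)"
  using exp_ge_add_one_self[of t] assms by (simp add: exp_minus field_simps)

lemma one_less_diff_powr_one_minus_inverse:
  fixes x K :: real
  assumes K: "1 \<le> K" and xK: "K \<le> x" and xe: "exp 1 + 2 \<le> x"
  shows "1 < x - x powr (1 - 1 / K)"
proof -
  define t where "t = ln x / K"
  have x2: "2 < x" using xe exp_gt_zero[of 1] by linarith
  have t: "0 < t" using x2 K by (simp add: t_def)
  have "x powr (1 - 1 / K) = x * exp (- t)"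
    using x2 by (simp add: powr_def t_def exp_diff exp_minus field_simps)
  also have "\<dots> \<le> x * (1 / (1 + t))"
    using exp_minus_le_inverse_one_plus[of t] t x2 by (intro mult_left_mono) auto
  finally have "x - x * (1 / (1 + t)) \<le> x - x powr (1 - 1 / K)" by linarith
  moreover have "1 < x - x * (1 / (1 + t))"
  proof -
    have "K < (x - 1) * ln x" using self_less_pred_mult_ln[OF xe] xK by linarith
    then have "1 < (x - 1) * t" using K by (simp add: t_def field_simps)
    then show ?thesis using t x2 by (simp add: field_simps)
  qed
  ultimately show ?thesis by linarith
qed

lemma log_ratio_bounds:
  fixes B a b c :: real
  assumes "1 < B" "1 < a" "a \<le> b" "b \<le> c"
  shows "1 \<le> log B c / log B b" and "log B c / log B b \<le> log B c / log B a"
proof -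
  have "0 < log B a" "log B a \<le> log B b" "log B b \<le> log B c"
    using assms by auto
  then show "1 \<le> log B c / log B b" and "log B c / log B b \<le> log B c / log B a"
    by (auto intro: divide_left_mono)
qed

lemma k_bounds:
  fixes n :: "nat \<Rightarrow> nat"
  assumes "2 \<le> n 0" and "\<And>i. i < s \<Longrightarrow> n i \<le> n (Suc i)" and "j \<le> s"
  shows "1 \<le> k n s j" and "k n s j \<le> k n s 0"
proof -
  have "n 0 \<le> n j" "n j \<le> n s"
    by (rule lift_Suc_mono_le_ivl[of "{..<s}"]; use assms(2,3) in auto)+
  with assms(1) show "1 \<le> k n s j" and "k n s j \<le> k n s 0"
    using log_ratio_bounds[of 2 "real (n 0)" "real (n j)" "real (n s)"] by (simp_all add: k_def)
qed

lemma powr_sum_root_bounds: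
  fixes s :: nat and x K :: real and e :: "nat \<Rightarrow> real"
  assumes s: "1 \<le> s" and x: "1 \<le> x" and K: "1 \<le> K"
    and e: "\<And>j. j < s \<Longrightarrow> 0 \<le> e j \<and> e j \<le> 1 - 1 / K"
    and root: "real s * x - 1 - (\<Sum>j<s. x powr e j) = 0"
  shows "(real s + 1) / real s \<le> x" and "x < max K (exp 1 + 2)"
proof -
  have "real s \<le> (\<Sum>j<s. x powr e j)"
    using sum_mono[of "{..<s}" "\<lambda>_. 1" "\<lambda>j. x powr e j"] e x by (simp add: ge_one_powr_ge_zero)
  with root s show "(real s + 1) / real s \<le> x" by (simp add: field_simps)
  have "(\<Sum>j<s. x powr e j) \<le> real s * x powr (1 - 1 / K)"
    using sum_mono[of "{..<s}" "\<lambda>j. x powr e j" "\<lambda>_. x powr (1 - 1 / K)"] e x by (simp add: powr_mono)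
  with root have gap: "real s * (x - x powr (1 - 1 / K)) \<le> 1"
    by (simp add: algebra_simps)
  show "x < max K (exp 1 + 2)"
  proof (rule ccontr)
    assume "\<not> ?thesis"
    then have "1 < x - x powr (1 - 1 / K)"
      using one_less_diff_powr_one_minus_inverse[OF K] by simp
    moreover have "x - x powr (1 - 1 / K) \<le> real s * (x - x powr (1 - 1 / K))"
      using calculation s by (simp add: mult_le_cancel_right1)
    ultimately show False using gap by linarith
  qed
qed

theorem lemma6p2:
  fixes s :: nat and n :: "nat \<Rightarrow> nat" and x0 :: real
  assumes hs: "s \<ge> 1"
    and hn0: "2 \<le> n 0"
    and hmono: "\<And>i. i < s \<Longrightarrow> n i \<le> n (Suc i)"
    and hx0: "x0 \<ge> 1"
    and hroot: "real s * x0 - 1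
        - (\<Sum>j<s. x0 powr ((k n s j - 1) / k n s j)) = 0"
  shows "(real s + 1) / real s \<le> x0 \<and> x0 < max (k n s 0) (exp 1 + 2)"
proof -
  have "0 \<le> (k n s j - 1) / k n s j \<and> (k n s j - 1) / k n s j \<le> 1 - 1 / k n s 0"
    if "j < s" for j
  proof -
    have "1 \<le> k n s j" "k n s j \<le> k n s 0"
      using k_bounds[OF hn0 hmono] that by auto
    then show ?thesis by (simp add: field_simps divide_left_mono)
  qed
  moreover have "1 \<le> k n s 0" using k_bounds(1)[OF hn0 hmono] by simp
  ultimately show ?thesis
    using powr_sum_root_bounds[OF hs hx0 _ _ hroot] by auto
qed

end
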